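(* Let $m\ge1$, $m_\alpha\ge1$ be integers and consider real observations $x_1,x_2,\dots$ and probability measures $\mathbb{P}_v$, $v\in\{1,2,\dots\}\cup\{\infty\}$, under which the $x_n$ are mutually independent, $x_n\sim\mathcal{N}(\mu_{0},\sigma^2)$ if $n<v$ or $n\ge v+m$, and $x_n\sim\mathcal{N}(\mu_{1},\sigma^2)$ if $v\le n<v+m$, where $\mu_0$ and $\sigma>0$ are known and $\mu_1$ is the (unknown) actual change parameter. Let $\tilde\mu_1\ne\mu_0$ be a tuned change parameter and define $$y_n=\mathrm{LLR}_{\mathrm c}(n)=\frac{\tilde\mu_1-\mu_0}{\sigma^2}\Big(x_n-\frac{\tilde\mu_1+\mu_0}{2}\Big),$$ which is the log-likelihood ratio of $\mathcal{N}(\tilde\mu_1,\sigma^2)$ against $\mathcal{N}(\mu_0,\sigma^2)$ at $x_n$. Then $y_n$ is Gaussian with variance $\sigma_y^2=-2\mu_{y,0}$ under both distributions, with mean $\mu_{y,0}=-\frac{(\tilde\mu_1-\mu_0)^2}{2\sigma^2}$ when $x_n\sim\mathcal{N}(\mu_0,\sigma^2)$ and mean $\mu_{y,1}=\frac{\tilde\mu_1-\mu_0}{\sigma^2}\big(\mu_1-\frac{\tilde\mu_1+\mu_0}{2}\big)$ when $x_n\sim\mathcal{N}(\mu_1,\sigma^2)$. Let $T_{\mathrm{F,C}}(h_{\mathrm c})=\inf\{n\ge m:\sum_{i=n-m+1}^n y_i\ge h_{\mathrm c}\}$ and let $\Phi$ be the standard normal cdf. Then for every $h_{\mathrm c}\in\mathbb{R}$,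 $$\mathbb{P}_{\mathrm{md}}\big(T_{\mathrm{F,C}}(h_{\mathrm c}),m\big)\le\beta_{\mathrm C}(h_{\mathrm c},m)=\Phi\Big(\frac{h_{\mathrm c}-m\mu_{y,1}}{\sqrt{m\sigma_y^2}}\Big),\qquad \mathbb{P}_{\mathrm{fa}}\big(T_{\mathrm{F,C}}(h_{\mathrm c}),m_\alpha\big)\le1-\Big[\Phi\Big(\frac{h_{\mathrm c}-m\mu_{y,0}}{\sqrt{m\sigma_y^2}}\Big)\Big]^{m_\alpha},$$ and for $\tilde\alpha\in(0,1)$ the threshold $$h_{\mathrm c}(\tilde\alpha)=\sqrt{m\sigma_y^2}\,\Phi^{-1}\Big[(1-\tilde\alpha)^{1/m_\alpha}\Big]+m\mu_{y,0}$$ guarantees $\mathbb{P}_{\mathrm{fa}}\big(T_{\mathrm{F,C}}(h_{\mathrm c}(\tilde\alpha)),m_\alpha\big)\le\tilde\alpha$.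
   Context: For a stopping time $T$ (with respect to the filtration of $x_1,x_2,\dots$): the worst-case probability of false alarm within a window of length $m_\alpha$ is $\mathbb{P}_{\mathrm{fa}}(T,m_\alpha)=\sup_{l\ge1}\mathbb{P}_\infty(l\le T<l+m_\alpha)$; the worst-case probability of missed detection with maximal permitted delay $m$ is $\mathbb{P}_{\mathrm{md}}(T,m)=\sup_{v\ge1}\mathbb{P}_v(T\ge v+m\mid T\ge v)$. *)

theory Defs
  imports "HOL-Probability.Probability" "HOL-Library.Extended_Nat"
begin

definition Phi :: "real \<Rightarrow> real" where
  "Phi = cdf (density lborel std_normal_density)"

definition Phi_inv :: "real \<Rightarrow> real" where
  "Phi_inv p = (THE z. Phi z = p)"

text \<open>Mean of observation n under P_v (v = infinity: no change).\<close>
definition obs_mean :: "real \<Rightarrow> real \<Rightarrow> nat \<Rightarrow> enat \<Rightarrow> nat \<Rightarrow> real" where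
  "obs_mean \<mu>0 \<mu>1 m v n = (if v \<le> enat n \<and> enat n < v + enat m then \<mu>1 else \<mu>0)"

definition LLRc :: "real \<Rightarrow> real \<Rightarrow> real \<Rightarrow> real \<Rightarrow> real" where
  "LLRc \<mu>0 \<mu>1t \<sigma> xv = (\<mu>1t - \<mu>0) / \<sigma>\<^sup>2 * (xv - (\<mu>1t + \<mu>0) / 2)"

definition T_FC :: "nat \<Rightarrow> real \<Rightarrow> (nat \<Rightarrow> real) \<Rightarrow> enat" where
  "T_FC m h ys =
     (if \<exists>n\<ge>m. (\<Sum>i\<in>{n-m+1..n}. ys i) \<ge> h
      then enat (LEAST n. n \<ge> m \<and> (\<Sum>i\<in>{n-m+1..n}. ys i) \<ge> h) else \<infinity>)"

text \<open>Worst-case false alarm probability within window ma, under P_infinity.\<close>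
definition P_fa :: "'a measure \<Rightarrow> ('a \<Rightarrow> enat) \<Rightarrow> nat \<Rightarrow> real" where
  "P_fa M T ma = (SUP l\<in>{1..}. measure M {\<omega> \<in> space M. enat l \<le> T \<omega> \<and> T \<omega> < enat (l + ma)})"

definition cprob :: "'a measure \<Rightarrow> 'a set \<Rightarrow> 'a set \<Rightarrow> real" where
  "cprob M A B = measure M (A \<inter> B) / measure M B"

definition P_md :: "(enat \<Rightarrow> 'a measure) \<Rightarrow> ('a \<Rightarrow> enat) \<Rightarrow> nat \<Rightarrow> real" where
  "P_md P T m = (SUP v\<in>{1..}. cprob (P (enat v))
       {\<omega> \<in> space (P (enat v)). T \<omega> \<ge> enat (v + m)}
       {\<omega> \<in> space (P (enat v)). T \<omega> \<ge> enat v})"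

end

theory Submission
  imports Defs
begin

text \<open>The log-likelihood ratio is an affine function \<open>b + a x\<close> of the observation with \<open>a \<noteq> 0\<close>,
  so a window sum of \<open>m\<close> ratios whose observations all have mean \<open>c\<close> is Gaussian with mean
  \<open>m (b + a c)\<close> and variance \<open>m a\<^sup>2 \<sigma>\<^sup>2\<close>.

  Missed detection: the event \<open>T \<ge> v\<close> is decided by the windows ending before \<open>v\<close>, hence by the
  observations before \<open>v\<close>; on \<open>T \<ge> v + m\<close> the window \<open>{v..v+m-1}\<close>, which is independent of them
  and sees only the post-change mean, stays below \<open>h\<close>. This bounds the conditional probability by
  the probability of the latter event.

  False alarm: an alarm in \<open>[l, l + m\<^sub>\<alpha>)\<close> requires one of at most \<open>m\<^sub>\<alpha>\<close> window sums to reach \<open>h\<close>.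
  The events "window sum below \<open>h\<close>" are decreasing in every observation (for the order given by
  the sign of \<open>a\<close>), so by Harris' inequality they are positively correlated and jointly hold with
  at least the product of their probabilities. The threshold \<open>h\<^sub>c(\<alpha>)\<close> makes this product
  equal to \<open>1 - \<alpha>\<close>.\<close>

section \<open>Harris' inequality on finite products\<close>

lemma (in prob_space) integrable_unit_valued:
  fixes f :: "'a \<Rightarrow> real"
  assumes "f \<in> borel_measurable M" "f \<in> space M \<rightarrow> {0..1}"
  shows "integrable M f" "(\<integral>x. f x \<partial>M) \<in> {0..1}"
proof -
  have bound: "0 \<le> f x" "f x \<le> 1" if "x \<in> space M" for x
    using assms(2) that by auto
  show i: "integrable M f"
    by (rule integrable_const_bound[where B=1]) (use assms(1) bound in auto)
  have "0 \<le> (\<integral>x. f x \<partial>M)" by (rule integral_nonneg_AE) (use bound in auto)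
  moreover have "(\<integral>x. f x \<partial>M) \<le> (\<integral>x. 1 \<partial>M)"
    by (rule integral_mono) (use i bound in auto)
  ultimately show "(\<integral>x. f x \<partial>M) \<in> {0..1}" by (simp add: prob_space)
qed

lemma (in prob_space) integral_mult_ge_comonotone:
  fixes f g :: "'a \<Rightarrow> real"
  assumes [simp]: "integrable M f" "integrable M g" "integrable M (\<lambda>x. f x * g x)"
    and comono: "\<And>a b. a \<in> space M \<Longrightarrow> b \<in> space M \<Longrightarrow> 0 \<le> (f a - f b) * (g a - g b)"
  shows "(\<integral>x. f x \<partial>M) * (\<integral>x. g x \<partial>M) \<le> (\<integral>x. f x * g x \<partial>M)"
proof -
  define F G H where "F = (\<integral>x. f x \<partial>M)" and "G = (\<integral>x. g x \<partial>M)" and "H = (\<integral>x. f x * g x \<partial>M)"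
  have pointwise: "0 \<le> f a * g a - f a * G - F * g a + H" if a: "a \<in> space M" for a
  proof -
    have "0 \<le> (\<integral>b. (f a - f b) * (g a - g b) \<partial>M)"
      by (rule integral_nonneg_AE) (auto intro: comono a)
    also have "(\<lambda>b. (f a - f b) * (g a - g b)) = (\<lambda>b. (f a * g a + f b * g b) - (f a * g b + g a * f b))"
      by (auto simp: algebra_simps)
    also have "(\<integral>b. (f a * g a + f b * g b) - (f a * g b + g a * f b) \<partial>M) = f a * g a - f a * G - F * g a + H"
      by (simp add: F_def G_def H_def prob_space)
    finally show ?thesis .
  qed
  have "0 \<le> (\<integral>a. f a * g a - f a * G - F * g a + H \<partial>M)"
    by (rule integral_nonneg_AE) (auto intro: pointwise)
  also have "\<dots> = H - F * G - F * G + H"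
    by (simp add: F_def G_def H_def mult.commute prob_space)
  finally show ?thesis unfolding F_def G_def H_def by simp
qed

definition antitone_coords :: "('b \<Rightarrow> 'b \<Rightarrow> bool) \<Rightarrow> 'i set \<Rightarrow> ('i \<Rightarrow> 'b) set \<Rightarrow> (('i \<Rightarrow> 'b) \<Rightarrow> real) \<Rightarrow> bool"
  where "antitone_coords R I S f \<longleftrightarrow> (\<forall>x\<in>S. \<forall>y\<in>S. (\<forall>i\<in>I. R (x i) (y i)) \<longrightarrow> f y \<le> f x)"

lemma antitone_coords_indicator:
  "antitone_coords R I S (indicator C) \<longleftrightarrow> (\<forall>x\<in>S. \<forall>y\<in>S. (\<forall>i\<in>I. R (x i) (y i)) \<longrightarrow> y \<in> C \<longrightarrow> x \<in> C)"
  by (auto simp: antitone_coords_def indicator_def)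

lemma fun_upd_in_space_PiM:
  assumes "z \<in> space (PiM I M)" "i \<notin> I" "a \<in> space (M i)"
  shows "z(i:=a) \<in> space (PiM (insert i I) M)"
  using measurable_space[OF measurable_component_update[OF assms(1,2)] assms(3)] by simp

lemma section_unit_valued:
  fixes f :: "('i \<Rightarrow> 'b) \<Rightarrow> real"
  assumes "i \<notin> I" "z \<in> space (PiM I M)" "prob_space (M i)"
    and "f \<in> borel_measurable (PiM (insert i I) M)" "f \<in> space (PiM (insert i I) M) \<rightarrow> {0..1}"
  shows "integrable (M i) (\<lambda>a. f (z(i:=a)))" "(\<integral>a. f (z(i:=a)) \<partial>M i) \<in> {0..1}"
proof -
  have "(\<lambda>a. f (z(i:=a))) \<in> borel_measurable (M i)"
    using measurable_comp[OF measurable_component_update[OF assms(2,1)] assms(4)] by (simp add: comp_def)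
  moreover have "(\<lambda>a. f (z(i:=a))) \<in> space (M i) \<rightarrow> {0..1}"
    by (intro Pi_I funcset_mem[OF assms(5)] fun_upd_in_space_PiM[OF assms(2,1)])
  ultimately show "integrable (M i) (\<lambda>a. f (z(i:=a)))" "(\<integral>a. f (z(i:=a)) \<partial>M i) \<in> {0..1}"
    by (rule prob_space.integrable_unit_valued[OF assms(3)])+
qed

lemma section_integral_PiM:
  fixes f :: "('i \<Rightarrow> 'b) \<Rightarrow> real"
  assumes I: "finite I" "i \<notin> I" and M: "\<And>j. prob_space (M j)"
    and f: "f \<in> borel_measurable (PiM (insert i I) M)" "f \<in> space (PiM (insert i I) M) \<rightarrow> {0..1}"
  shows "(\<lambda>z. \<integral>a. f (z(i:=a)) \<partial>M i) \<in> borel_measurable (PiM I M)"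
    and "(\<lambda>z. \<integral>a. f (z(i:=a)) \<partial>M i) \<in> space (PiM I M) \<rightarrow> {0..1}"
    and "(\<integral>x. f x \<partial>PiM (insert i I) M) = (\<integral>z. (\<integral>a. f (z(i:=a)) \<partial>M i) \<partial>PiM I M)"
proof -
  interpret product_sigma_finite M
    unfolding product_sigma_finite_def using M prob_space_imp_sigma_finite by blast
  have upd: "(\<lambda>(z, a). z(i:=a)) \<in> measurable (PiM I M \<Otimes>\<^sub>M M i) (PiM (insert i I) M)"
    using measurable_fun_upd[where I="insert i I" and J=I and i=i and N="PiM I M \<Otimes>\<^sub>M M i" and f=fst
        and M=M and h=snd]
    by (simp add: split_beta')
  show "(\<lambda>z. \<integral>a. f (z(i:=a)) \<partial>M i) \<in> borel_measurable (PiM I M)"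
    using sigma_finite_measure.borel_measurable_lebesgue_integral[OF prob_space_imp_sigma_finite[OF M],
        of "\<lambda>z a. f (z(i:=a))" "PiM I M"] measurable_comp[OF upd f(1)]
    by (simp add: comp_def split_beta')
  show "(\<lambda>z. \<integral>a. f (z(i:=a)) \<partial>M i) \<in> space (PiM I M) \<rightarrow> {0..1}"
    using section_unit_valued(2)[OF I(2) _ M f] by blast
  show "(\<integral>x. f x \<partial>PiM (insert i I) M) = (\<integral>z. (\<integral>a. f (z(i:=a)) \<partial>M i) \<partial>PiM I M)"
    using product_integral_insert[OF I] prob_space.integrable_unit_valued(1)[OF prob_space_PiM[OF M] f]
    by blast
qed

lemma section_integral_antitone:
  fixes f :: "('i \<Rightarrow> 'b) \<Rightarrow> real"
  assumes I: "i \<notin> I" and M: "\<And>j. prob_space (M j)" and R: "\<And>a b. R a b \<or> R b a"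
    and f: "f \<in> borel_measurable (PiM (insert i I) M)" "f \<in> space (PiM (insert i I) M) \<rightarrow> {0..1}"
    and anti: "antitone_coords R (insert i I) (space (PiM (insert i I) M)) f"
  shows "antitone_coords R I (space (PiM I M)) (\<lambda>z. \<integral>a. f (z(i:=a)) \<partial>M i)"
  unfolding antitone_coords_def
proof (intro ballI impI)
  fix z z' assume z: "z \<in> space (PiM I M)" and z': "z' \<in> space (PiM I M)" and zz': "\<forall>j\<in>I. R (z j) (z' j)"
  show "(\<integral>a. f (z'(i:=a)) \<partial>M i) \<le> (\<integral>a. f (z(i:=a)) \<partial>M i)"
  proof (rule integral_mono[OF section_unit_valued(1)[OF I z' M f] section_unit_valued(1)[OF I z M f]])
    fix a assume "a \<in> space (M i)"
    moreover have "R a a" using R by blast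
    ultimately show "f (z'(i:=a)) \<le> f (z(i:=a))"
      using anti fun_upd_in_space_PiM[OF z I] fun_upd_in_space_PiM[OF z' I] zz'
      unfolding antitone_coords_def by auto
  qed
qed

lemma section_integral_mult_ge:
  fixes f g :: "('i \<Rightarrow> 'b) \<Rightarrow> real"
  assumes I: "i \<notin> I" and z: "z \<in> space (PiM I M)" and M: "prob_space (M i)" and R: "\<And>a b. R a b \<or> R b a"
    and f: "f \<in> borel_measurable (PiM (insert i I) M)" "f \<in> space (PiM (insert i I) M) \<rightarrow> {0..1}"
    and g: "g \<in> borel_measurable (PiM (insert i I) M)" "g \<in> space (PiM (insert i I) M) \<rightarrow> {0..1}"
    and anti: "antitone_coords R (insert i I) (space (PiM (insert i I) M)) f"
      "antitone_coords R (insert i I) (space (PiM (insert i I) M)) g"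
  shows "(\<integral>a. f (z(i:=a)) \<partial>M i) * (\<integral>a. g (z(i:=a)) \<partial>M i) \<le> (\<integral>a. f (z(i:=a)) * g (z(i:=a)) \<partial>M i)"
proof (rule prob_space.integral_mult_ge_comonotone[OF M])
  have "(\<lambda>x. f x * g x) \<in> space (PiM (insert i I) M) \<rightarrow> {0..1}"
    using f(2) g(2) by (auto simp: Pi_iff intro!: mult_le_one)
  then show "integrable (M i) (\<lambda>a. f (z(i:=a)) * g (z(i:=a)))"
    using section_unit_valued(1)[OF I z M, of "\<lambda>x. f x * g x"] f(1) g(1) by simp
  show "integrable (M i) (\<lambda>a. f (z(i:=a)))" "integrable (M i) (\<lambda>a. g (z(i:=a)))"
    by (rule section_unit_valued(1)[OF I z M f]) (rule section_unit_valued(1)[OF I z M g])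
  have R_refl: "R c c" for c using R by blast
  have le: "f (z(i:=d)) \<le> f (z(i:=c)) \<and> g (z(i:=d)) \<le> g (z(i:=c))"
    if "R c d" "c \<in> space (M i)" "d \<in> space (M i)" for c d
    using anti fun_upd_in_space_PiM[OF z I] that R_refl unfolding antitone_coords_def by auto
  fix a b assume "a \<in> space (M i)" "b \<in> space (M i)"
  then show "0 \<le> (f (z(i:=a)) - f (z(i:=b))) * (g (z(i:=a)) - g (z(i:=b)))"
    using R[of a b] le[of a b] le[of b a] by (auto intro: mult_nonneg_nonneg mult_nonpos_nonpos)
qed

lemma PiM_harris_inequality:
  fixes M :: "'i \<Rightarrow> 'b measure" and f g :: "('i \<Rightarrow> 'b) \<Rightarrow> real"
  assumes "finite I" and M: "\<And>i. prob_space (M i)" and R: "\<And>a b. R a b \<or> R b a"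
    and "f \<in> borel_measurable (PiM I M)" "f \<in> space (PiM I M) \<rightarrow> {0..1}"
    and "g \<in> borel_measurable (PiM I M)" "g \<in> space (PiM I M) \<rightarrow> {0..1}"
    and "antitone_coords R I (space (PiM I M)) f" "antitone_coords R I (space (PiM I M)) g"
  shows "(\<integral>x. f x \<partial>PiM I M) * (\<integral>x. g x \<partial>PiM I M) \<le> (\<integral>x. f x * g x \<partial>PiM I M)"
  using assms(1,4-)
proof (induction I arbitrary: f g rule: finite_induct)
  case empty
  show ?case by (simp add: PiM_empty lebesgue_integral_count_space_finite)
next
  case (insert i I f g)
  let ?sec = "\<lambda>h z. \<integral>a. h (z(i:=a)) \<partial>M i"
  have fg: "(\<lambda>x. f x * g x) \<in> borel_measurable (PiM (insert i I) M)"
      "(\<lambda>x. f x * g x) \<in> space (PiM (insert i I) M) \<rightarrow> {0..1}"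
    using insert.prems(1-4) by (auto simp: Pi_iff intro!: mult_le_one)
  note sec_f = section_integral_PiM[OF insert.hyps M insert.prems(1,2)]
  note sec_g = section_integral_PiM[OF insert.hyps M insert.prems(3,4)]
  note sec_fg = section_integral_PiM[OF insert.hyps M fg]
  have "(\<integral>z. ?sec f z \<partial>PiM I M) * (\<integral>z. ?sec g z \<partial>PiM I M) \<le> (\<integral>z. ?sec f z * ?sec g z \<partial>PiM I M)"
    using insert.IH[OF sec_f(1,2) sec_g(1,2)]
      section_integral_antitone[OF insert.hyps(2) M R insert.prems(1,2,5)]
      section_integral_antitone[OF insert.hyps(2) M R insert.prems(3,4,6)]
    by blast
  also have "\<dots> \<le> (\<integral>z. ?sec (\<lambda>x. f x * g x) z \<partial>PiM I M)"
  proof (rule integral_mono)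
    show "integrable (PiM I M) (\<lambda>z. ?sec f z * ?sec g z)"
      using sec_f(1,2) sec_g(1,2)
      by (intro prob_space.integrable_unit_valued(1)[OF prob_space_PiM[OF M]])
        (auto simp: Pi_iff simp del: fun_upd_apply intro!: mult_le_one)
    show "integrable (PiM I M) (?sec (\<lambda>x. f x * g x))"
      by (rule prob_space.integrable_unit_valued(1)[OF prob_space_PiM[OF M] sec_fg(1,2)])
    show "?sec f z * ?sec g z \<le> ?sec (\<lambda>x. f x * g x) z" if "z \<in> space (PiM I M)" for z
      by (rule section_integral_mult_ge[OF insert.hyps(2) that M R insert.prems])
  qed
  finally show ?case unfolding sec_f(3) sec_g(3) sec_fg(3) .
qed

lemma (in prob_space) harris_inequality_indep_vars:
  fixes X :: "'i \<Rightarrow> 'a \<Rightarrow> 'b"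
  assumes I: "finite I" "I \<noteq> {}" and indep: "indep_vars N X I" and R: "\<And>a b. R a b \<or> R b a"
    and C: "C \<in> sets (PiM I N)" "antitone_coords R I (space (PiM I N)) (indicator C)"
    and D: "D \<in> sets (PiM I N)" "antitone_coords R I (space (PiM I N)) (indicator D)"
  shows "prob {\<omega> \<in> space M. restrict (\<lambda>i. X i \<omega>) I \<in> C} * prob {\<omega> \<in> space M. restrict (\<lambda>i. X i \<omega>) I \<in> D}
    \<le> prob {\<omega> \<in> space M. restrict (\<lambda>i. X i \<omega>) I \<in> C \<inter> D}"
proof -
  define Y where "Y \<omega> = restrict (\<lambda>i. X i \<omega>) I" for \<omega>
  \<comment> \<open>The factors outside \<open>I\<close> are irrelevant; a Dirac measure makes each of them a probability space.\<close>
  define N' where "N' i = (if i \<in> I then distr M (N i) (X i) else return (count_space UNIV) undefined)"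
    for i
  have X: "X i \<in> measurable M (N i)" if "i \<in> I" for i
    using indep that unfolding indep_vars_def by blast
  have N': "prob_space (N' i)" for i
    by (auto simp: N'_def intro: prob_space_distr X prob_space_return)
  have Y: "Y \<in> measurable M (PiM I N)"
    unfolding Y_def by (rule measurable_restrict) (rule X)
  have "distr M (PiM I N) Y = PiM I (\<lambda>i. distr M (N i) (X i))"
    using indep_vars_iff_distr_eq_PiM'[OF I(2), where M'=N and X=X] indep X unfolding Y_def by simp
  also have "\<dots> = PiM I N'" by (rule PiM_cong) (simp_all add: N'_def)
  finally have distr_Y: "distr M (PiM I N) Y = PiM I N'" .
  have sets_eq: "sets (PiM I N') = sets (PiM I N)"
    by (rule sets_PiM_cong) (simp_all add: N'_def)
  then have space_eq: "space (PiM I N') = space (PiM I N)"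
    by (rule sets_eq_imp_space_eq)
  have prob_Y: "prob {\<omega> \<in> space M. Y \<omega> \<in> A} = measure (PiM I N') A" if "A \<in> sets (PiM I N)" for A
    using measure_distr[OF Y that] unfolding distr_Y by (simp add: vimage_def Int_def conj_commute)
  have integral_indicator_eq: "(\<integral>z. indicator A z \<partial>PiM I N') = measure (PiM I N') A"
    if "A \<in> sets (PiM I N)" for A
  proof -
    interpret Q: prob_space "PiM I N'" by (rule prob_space_PiM[OF N'])
    show ?thesis using that sets_eq by simp
  qed
  have "(\<integral>z. indicator C z \<partial>PiM I N') * (\<integral>z. indicator D z \<partial>PiM I N')
      \<le> (\<integral>z. (indicator C z * indicator D z :: real) \<partial>PiM I N')"
    by (rule PiM_harris_inequality[OF I(1) N' R])
      (use C D sets_eq space_eq in \<open>auto intro: borel_measurable_indicator\<close>)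
  moreover have "(\<lambda>z. indicator C z * indicator D z :: real) = indicator (C \<inter> D)"
    by (auto simp: indicator_def fun_eq_iff)
  ultimately have "measure (PiM I N') C * measure (PiM I N') D \<le> measure (PiM I N') (C \<inter> D)"
    using C(1) D(1) integral_indicator_eq by simp
  then show ?thesis
    using prob_Y[OF C(1)] prob_Y[OF D(1)] prob_Y[OF sets.Int[OF C(1) D(1)]] unfolding Y_def by simp
qed

lemma (in prob_space) harris_inequality_indep_vars_prod:
  fixes X :: "'i \<Rightarrow> 'a \<Rightarrow> 'b" and C :: "'k \<Rightarrow> ('i \<Rightarrow> 'b) set"
  assumes I: "finite I" "I \<noteq> {}" and indep: "indep_vars N X I" and R: "\<And>a b. R a b \<or> R b a"
    and "finite K"
    and C: "\<And>k. k \<in> K \<Longrightarrow> C k \<in> sets (PiM I N)"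
      "\<And>k. k \<in> K \<Longrightarrow> antitone_coords R I (space (PiM I N)) (indicator (C k))"
  shows "(\<Prod>k\<in>K. prob {\<omega> \<in> space M. restrict (\<lambda>i. X i \<omega>) I \<in> C k})
    \<le> prob {\<omega> \<in> space M. \<forall>k\<in>K. restrict (\<lambda>i. X i \<omega>) I \<in> C k}"
  using assms(5-)
proof (induction K rule: finite_induct)
  case empty
  then show ?case by (simp add: prob_space)
next
  case (insert k K)
  define D where "D = {z \<in> space (PiM I N). \<forall>k\<in>K. z \<in> C k}"
  have D: "D \<in> sets (PiM I N)"
    unfolding D_def using insert.hyps(1) insert.prems(1) by (intro sets.sets_Collect_finite_All) auto
  have "antitone_coords R I (space (PiM I N)) (indicator D)"
    using insert.prems(2) by (auto simp: D_def antitone_coords_indicator)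
  then have "prob {\<omega> \<in> space M. restrict (\<lambda>i. X i \<omega>) I \<in> C k} * prob {\<omega> \<in> space M. restrict (\<lambda>i. X i \<omega>) I \<in> D}
      \<le> prob {\<omega> \<in> space M. restrict (\<lambda>i. X i \<omega>) I \<in> C k \<inter> D}"
    using insert.prems by (intro harris_inequality_indep_vars[OF I indep R _ _ D]) auto
  moreover have "restrict (\<lambda>i. X i \<omega>) I \<in> space (PiM I N)" if "\<omega> \<in> space M" for \<omega>
    using indep that unfolding indep_vars_def by (auto simp: space_PiM measurable_space)
  then have "{\<omega> \<in> space M. restrict (\<lambda>i. X i \<omega>) I \<in> D} = {\<omega> \<in> space M. \<forall>k\<in>K. restrict (\<lambda>i. X i \<omega>) I \<in> C k}"
      "{\<omega> \<in> space M. restrict (\<lambda>i. X i \<omega>) I \<in> C k \<inter> D}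
        = {\<omega> \<in> space M. \<forall>k'\<in>insert k K. restrict (\<lambda>i. X i \<omega>) I \<in> C k'}"
    by (auto simp: D_def)
  ultimately have "prob {\<omega> \<in> space M. restrict (\<lambda>i. X i \<omega>) I \<in> C k}
      * prob {\<omega> \<in> space M. \<forall>k\<in>K. restrict (\<lambda>i. X i \<omega>) I \<in> C k}
      \<le> prob {\<omega> \<in> space M. \<forall>k'\<in>insert k K. restrict (\<lambda>i. X i \<omega>) I \<in> C k'}"
    by simp
  moreover have "(\<Prod>k\<in>K. prob {\<omega> \<in> space M. restrict (\<lambda>i. X i \<omega>) I \<in> C k})
      \<le> prob {\<omega> \<in> space M. \<forall>k\<in>K. restrict (\<lambda>i. X i \<omega>) I \<in> C k}"
    using insert.prems by (intro insert.IH) auto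
  ultimately show ?case
    unfolding prod.insert[OF insert.hyps] by (meson measure_nonneg mult_left_mono order_trans)
qed

section \<open>The standard normal distribution function\<close>

interpretation std_normal: real_distribution std_normal_distribution
  by (rule real_dist_normal_dist)

lemma Phi_bounds: "0 \<le> Phi x" "Phi x \<le> 1"
  unfolding Phi_def by (simp_all add: std_normal.cdf_nonneg std_normal.cdf_bounded_prob)

lemma std_normal_singleton_null: "{t} \<in> null_sets std_normal_distribution"
proof -
  have "AE x in lborel. x \<in> {t} \<longrightarrow> ennreal (std_normal_density x) = 0"
    using AE_lborel_singleton[of t] by eventually_elim simp
  then show ?thesis by (simp add: null_sets_density_iff)
qed

lemma isCont_Phi: "isCont Phi x"
  unfolding Phi_def std_normal.isCont_cdf using std_normal_singleton_null[of x]
  by (simp add: std_normal.emeasure_eq_measure null_sets_def)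

lemma measure_std_normal_lessThan: "measure std_normal_distribution {..<t} = Phi t"
proof -
  have "Phi t = measure std_normal_distribution ({..<t} \<union> {t})"
    unfolding Phi_def cdf_def by (rule arg_cong[where f="measure _"]) auto
  also have "\<dots> = measure std_normal_distribution {..<t}"
    by (rule measure_Un_null_set[OF _ std_normal_singleton_null]) simp
  finally show ?thesis by simp
qed

lemma Phi_strict_mono: "strict_mono Phi"
proof
  fix x y :: real assume "x < y"
  have "{x<..y} \<notin> null_sets std_normal_distribution"
  proof
    assume "{x<..y} \<in> null_sets std_normal_distribution"
    then have "AE z in lborel. z \<in> {x<..y} \<longrightarrow> std_normal_density z = 0"
      by (subst (asm) null_sets_density_iff) auto
    then have "AE z in lborel. z \<notin> {x<..y}"
      by eventually_elim (auto simp: normal_density_def)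
    then have "{x<..y} \<in> null_sets lborel" by (subst AE_iff_null_sets) auto
    then show False using \<open>x < y\<close> emeasure_lborel_Ioc[of x y] by (simp add: null_sets_def)
  qed
  then have "0 < measure std_normal_distribution {x<..y}"
    by (simp add: std_normal.emeasure_eq_measure null_sets_def less_le)
  also have "measure std_normal_distribution {x<..y} = Phi y - Phi x"
    unfolding Phi_def by (rule std_normal.cdf_diff_eq[OF \<open>x < y\<close>, symmetric])
  finally show "Phi x < Phi y" by simp
qed

lemma Phi_Phi_inv:
  assumes "0 < p" "p < 1"
  shows "Phi (Phi_inv p) = p"
proof -
  have "eventually (\<lambda>x. Phi x < p) at_bot" "eventually (\<lambda>x. p < Phi x) at_top"
    unfolding Phi_def
    using order_tendstoD(1)[OF std_normal.cdf_lim_at_top_prob assms(2)]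
      order_tendstoD(2)[OF std_normal.cdf_lim_at_bot assms(1)]
    by simp_all
  then obtain a b where a: "\<And>x. x \<le> a \<Longrightarrow> Phi x < p" and b: "\<And>x. b \<le> x \<Longrightarrow> p < Phi x"
    by (auto simp: eventually_at_bot_linorder eventually_at_top_linorder)
  have "Phi (min a b) \<le> p" "p \<le> Phi (max a b)" "min a b \<le> max a b"
    using a[of "min a b"] b[of "max a b"] by auto
  then obtain z where "Phi z = p"
    using IVT[of Phi "min a b" p "max a b"] isCont_Phi by blast
  moreover have "w = z" if "Phi w = p" for w
    using strict_mono_eq[OF Phi_strict_mono, of w z] that \<open>Phi z = p\<close> by simp
  ultimately have "Phi_inv p = z"
    unfolding Phi_inv_def by (rule the_equality)
  with \<open>Phi z = p\<close> show ?thesis by simp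
qed

lemma (in prob_space) prob_normal_less:
  assumes X: "distributed M lborel X (\<lambda>z. ennreal (normal_density \<mu> s z))" and s: "s > 0"
  shows "prob {\<omega> \<in> space M. X \<omega> < h} = Phi ((h - \<mu>) / s)"
proof -
  define Z where "Z \<omega> = (X \<omega> - \<mu>) / s" for \<omega>
  have Z: "distributed M lborel Z std_normal_density"
    using normal_standard_normal_convert[OF s, of X \<mu>] X unfolding Z_def by simp
  have "{\<omega> \<in> space M. X \<omega> < h} = Z -` {..<(h - \<mu>) / s} \<inter> space M"
    using s by (auto simp: Z_def divide_strict_right_mono field_simps)
  then have "prob {\<omega> \<in> space M. X \<omega> < h} = measure (distr M lborel Z) {..<(h - \<mu>) / s}"
    using measure_distr[OF distributed_measurable[OF Z]] by simp
  also have "\<dots> = Phi ((h - \<mu>) / s)"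
    using distributed_distr_eq_density[OF Z] measure_std_normal_lessThan by simp
  finally show ?thesis .
qed

section \<open>The moving-sum detector on Gaussian observations\<close>

definition moving_sum :: "nat \<Rightarrow> (nat \<Rightarrow> real) \<Rightarrow> nat \<Rightarrow> real"
  where "moving_sum m ys n = (\<Sum>i\<in>{n-m+1..n}. ys i)"

lemma enat_le_T_FC_iff:
  "enat v \<le> T_FC m h ys \<longleftrightarrow> (\<forall>n. m \<le> n \<and> n < v \<longrightarrow> moving_sum m ys n < h)"
proof (cases "\<exists>n. m \<le> n \<and> h \<le> moving_sum m ys n")
  case True
  define L where "L = (LEAST n. m \<le> n \<and> h \<le> moving_sum m ys n)"
  have T: "T_FC m h ys = enat L"
    using True by (simp add: T_FC_def L_def moving_sum_def)
  have L: "m \<le> L" "h \<le> moving_sum m ys L"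
    unfolding L_def using LeastI_ex[OF True] by auto
  have L_least: "L \<le> n" if "m \<le> n" "h \<le> moving_sum m ys n" for n
    unfolding L_def using that by (simp add: Least_le)
  show ?thesis
  proof
    assume "enat v \<le> T_FC m h ys"
    then have "v \<le> L" by (simp add: T)
    then show "\<forall>n. m \<le> n \<and> n < v \<longrightarrow> moving_sum m ys n < h"
      by (auto intro: ccontr dest!: L_least)
  next
    assume "\<forall>n. m \<le> n \<and> n < v \<longrightarrow> moving_sum m ys n < h"
    then have "v \<le> L" using L by (auto simp: not_le[symmetric])
    then show "enat v \<le> T_FC m h ys" by (simp add: T)
  qed
next
  case False
  then have "T_FC m h ys = \<infinity>" by (auto simp: T_FC_def moving_sum_def)
  with False show ?thesis by (auto simp: not_le) (meson not_less)
qed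

lemma T_FC_alarm_window:
  assumes "enat l \<le> T_FC m h ys" "T_FC m h ys < enat k"
  shows "\<exists>n. l \<le> n \<and> n < k \<and> m \<le> n \<and> h \<le> moving_sum m ys n"
proof -
  obtain n where "m \<le> n" "n < k" "h \<le> moving_sum m ys n"
    using assms(2) enat_le_T_FC_iff[of k] by (auto simp: not_le[symmetric] not_less)
  moreover have "l \<le> n"
    using assms(1) enat_le_T_FC_iff[of l] \<open>m \<le> n\<close> \<open>h \<le> moving_sum m ys n\<close> by (auto simp: not_less[symmetric])
  ultimately show ?thesis by blast
qed

lemma moving_sum_restrict:
  "{n-m+1..n} \<subseteq> A \<Longrightarrow> moving_sum m (\<lambda>i. f (restrict z A i)) n = moving_sum m (\<lambda>i. f (z i)) n"
  unfolding moving_sum_def by (rule sum.cong) auto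

lemma sets_PiM_moving_sum_less:
  assumes "{n-m+1..n} \<subseteq> A" "f \<in> borel_measurable borel"
  shows "{z \<in> space (PiM A (\<lambda>_. borel)). moving_sum m (\<lambda>i. f (z i)) n < h} \<in> sets (PiM A (\<lambda>_. borel))"
  unfolding moving_sum_def using assms(2) by measurable (use assms(1) in auto)

lemma cprob_le_if_measure_Int_le:
  assumes "measure M (A \<inter> B) \<le> p * measure M B" "0 \<le> p"
  shows "cprob M A B \<le> p"
  using assms measure_nonneg[of M B]
  by (cases "measure M B = 0") (simp_all add: cprob_def divide_le_eq)

locale gaussian_moving_sum = prob_space M for M :: "'a measure" +
  fixes x :: "nat \<Rightarrow> 'a \<Rightarrow> real" and \<mu> :: "nat \<Rightarrow> real" and \<sigma> :: real
    and m :: nat and a b :: real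
  assumes indep_obs: "indep_vars (\<lambda>_. borel) x {1..}"
    and normal_obs: "\<And>n. 1 \<le> n \<Longrightarrow> distributed M lborel (x n) (\<lambda>z. ennreal (normal_density (\<mu> n) \<sigma> z))"
    and sigma_pos: "0 < \<sigma>" and window_pos: "1 \<le> m" and slope_nonzero: "a \<noteq> 0"
begin

definition window_sum :: "nat \<Rightarrow> 'a \<Rightarrow> real"
  where "window_sum n \<omega> = moving_sum m (\<lambda>i. b + a * x i \<omega>) n"

definition alarm_time :: "real \<Rightarrow> 'a \<Rightarrow> enat"
  where "alarm_time h \<omega> = T_FC m h (\<lambda>i. b + a * x i \<omega>)"

lemma window_sum_restrict:
  "{n-m+1..n} \<subseteq> A \<Longrightarrow> window_sum n \<omega> = moving_sum m (\<lambda>i. b + a * restrict (\<lambda>i. x i \<omega>) A i) n"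
  unfolding window_sum_def by (rule moving_sum_restrict[symmetric])

lemma sets_window_sum_less: "{\<omega> \<in> space M. window_sum n \<omega> < h} \<in> events"
proof -
  have "x i \<in> borel_measurable M" if "i \<in> {n-m+1..n}" for i
    using normal_obs[of i] that by (auto dest: distributed_measurable)
  then show ?thesis unfolding window_sum_def moving_sum_def by measurable
qed

lemma prob_window_sum_less:
  assumes "m \<le> n" and mean: "\<And>i. i \<in> {n-m+1..n} \<Longrightarrow> \<mu> i = c"
  shows "prob {\<omega> \<in> space M. window_sum n \<omega> < h}
    = Phi ((h - real m * (b + a * c)) / sqrt (real m * (a\<^sup>2 * \<sigma>\<^sup>2)))"
proof -
  define W where "W = {n-m+1..n}"
  have W: "finite W" "W \<noteq> {}" "card W = m" "W \<subseteq> {1..}"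
    using assms(1) window_pos by (auto simp: W_def)
  have "indep_vars (\<lambda>_. borel) (\<lambda>i \<omega>. b + a * x i \<omega>) W"
    using indep_vars_subset[OF indep_vars_compose2[OF indep_obs, where Y="\<lambda>i v. b + a * v" and N="\<lambda>_. borel"] W(4)]
    by simp
  moreover have "distributed M lborel (\<lambda>\<omega>. b + a * x i \<omega>) (\<lambda>z. ennreal (normal_density (b + a * c) (\<bar>a\<bar> * \<sigma>) z))"
    if "i \<in> W" for i
    using normal_density_affine[OF normal_obs sigma_pos slope_nonzero, of i b] mean that W(4)
    by (auto simp: W_def)
  ultimately have "distributed M lborel (window_sum n)
      (normal_density (\<Sum>i\<in>W. b + a * c) (sqrt (\<Sum>i\<in>W. (\<bar>a\<bar> * \<sigma>)\<^sup>2)))"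
    unfolding window_sum_def moving_sum_def W_def[symmetric]
    by (intro sum_indep_normal[OF W(1,2)]) (use sigma_pos slope_nonzero in auto)
  then show ?thesis
    using prob_normal_less[of "window_sum n"] W(3) window_pos sigma_pos slope_nonzero
    by (simp add: power_mult_distrib)
qed

lemma prob_window_sum_less_indep_past:
  assumes "1 \<le> v"
  shows "prob ({\<omega> \<in> space M. window_sum (v + m - 1) \<omega> < h} \<inter> {\<omega> \<in> space M. \<forall>n\<in>{m..<v}. window_sum n \<omega> < h})
    = prob {\<omega> \<in> space M. window_sum (v + m - 1) \<omega> < h} * prob {\<omega> \<in> space M. \<forall>n\<in>{m..<v}. window_sum n \<omega> < h}"
proof -
  define A B where "A = {v..v + m - 1}" and "B = {1..<v}"
  define Y where "Y J \<omega> = restrict (\<lambda>i. x i \<omega>) J" for J \<omega>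
  define CA where "CA = {z \<in> space (PiM A (\<lambda>_. borel)). moving_sum m (\<lambda>i. b + a * z i) (v + m - 1) < h}"
  define CB where "CB = {z \<in> space (PiM B (\<lambda>_. borel)). \<forall>n\<in>{m..<v}. moving_sum m (\<lambda>i. b + a * z i) n < h}"
  have windows: "{v + m - 1 - m + 1..v + m - 1} \<subseteq> A" "\<And>n. n \<in> {m..<v} \<Longrightarrow> {n-m+1..n} \<subseteq> B"
    using assms window_pos by (auto simp: A_def B_def)
  have "A \<inter> B = {}" "A \<subseteq> {1..}" "B \<subseteq> {1..}"
    using assms by (auto simp: A_def B_def)
  then have indep: "indep_var (PiM A (\<lambda>_. borel)) (Y A) (PiM B (\<lambda>_. borel)) (Y B)"
    unfolding Y_def by (rule indep_var_restrict[OF indep_obs])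
  have "CA \<in> sets (PiM A (\<lambda>_. borel))"
    unfolding CA_def by (rule sets_PiM_moving_sum_less[OF windows(1)]) simp
  moreover have "CB \<in> sets (PiM B (\<lambda>_. borel))"
    unfolding CB_def
    by (intro sets.sets_Collect_finite_All sets_PiM_moving_sum_less[OF windows(2)]) auto
  ultimately have "prob ((\<lambda>\<omega>. (Y A \<omega>, Y B \<omega>)) -` (CA \<times> CB) \<inter> space M)
      = prob (Y A -` CA \<inter> space M) * prob (Y B -` CB \<inter> space M)"
    by (rule indep_varD[OF indep])
  moreover have "Y A -` CA \<inter> space M = {\<omega> \<in> space M. window_sum (v + m - 1) \<omega> < h}"
    using window_sum_restrict[OF windows(1)] by (auto simp: CA_def Y_def space_PiM)
  moreover have "Y B -` CB \<inter> space M = {\<omega> \<in> space M. \<forall>n\<in>{m..<v}. window_sum n \<omega> < h}"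
    using window_sum_restrict[OF windows(2)] by (auto simp: CB_def Y_def space_PiM)
  moreover have "(\<lambda>\<omega>. (Y A \<omega>, Y B \<omega>)) -` (CA \<times> CB) \<inter> space M
      = (Y A -` CA \<inter> space M) \<inter> (Y B -` CB \<inter> space M)"
    by auto
  ultimately show ?thesis by simp
qed

lemma missed_detection_le:
  assumes "1 \<le> v" and mean: "\<And>i. v \<le> i \<Longrightarrow> i < v + m \<Longrightarrow> \<mu> i = c"
  shows "cprob M {\<omega> \<in> space M. enat (v + m) \<le> alarm_time h \<omega>} {\<omega> \<in> space M. enat v \<le> alarm_time h \<omega>}
    \<le> Phi ((h - real m * (b + a * c)) / sqrt (real m * (a\<^sup>2 * \<sigma>\<^sup>2)))"
proof -
  define Last Past where "Last = {\<omega> \<in> space M. window_sum (v + m - 1) \<omega> < h}"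
    and "Past = {\<omega> \<in> space M. \<forall>n\<in>{m..<v}. window_sum n \<omega> < h}"
  have Past: "Past \<in> events"
    unfolding Past_def by (intro sets.sets_Collect_finite_All sets_window_sum_less) auto
  have "{\<omega> \<in> space M. enat v \<le> alarm_time h \<omega>} = Past"
    by (auto simp: Past_def alarm_time_def enat_le_T_FC_iff window_sum_def)
  moreover have "{\<omega> \<in> space M. enat (v + m) \<le> alarm_time h \<omega>} \<inter> Past \<subseteq> Last \<inter> Past"
    using assms(1) window_pos by (auto simp: Last_def alarm_time_def enat_le_T_FC_iff window_sum_def)
  then have "prob ({\<omega> \<in> space M. enat (v + m) \<le> alarm_time h \<omega>} \<inter> Past) \<le> prob Last * prob Past"
    using finite_measure_mono[of _ "Last \<inter> Past"] Past sets_window_sum_less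
      prob_window_sum_less_indep_past[OF assms(1)]
    by (simp add: Last_def Past_def)
  moreover have "prob Last = Phi ((h - real m * (b + a * c)) / sqrt (real m * (a\<^sup>2 * \<sigma>\<^sup>2)))"
    unfolding Last_def using assms window_pos by (intro prob_window_sum_less) auto
  ultimately show ?thesis
    by (intro cprob_le_if_measure_Int_le) (simp_all add: Phi_bounds)
qed

lemma prod_prob_window_sum_less_le:
  assumes "finite N"
  shows "(\<Prod>n\<in>N. prob {\<omega> \<in> space M. window_sum n \<omega> < h}) \<le> prob {\<omega> \<in> space M. \<forall>n\<in>N. window_sum n \<omega> < h}"
proof -
  define I where "I = {1..Suc (Max (insert 0 N))}"
  define C where "C n = {z \<in> space (PiM I (\<lambda>_. borel)). moving_sum m (\<lambda>i. b + a * z i) n < h}" for n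
  have windows: "{n-m+1..n} \<subseteq> I" if "n \<in> N" for n
  proof -
    have "n \<le> Max (insert 0 N)" using assms that by simp
    then show ?thesis by (auto simp: I_def)
  qed
  have indep: "indep_vars (\<lambda>_. borel) x I"
    by (rule indep_vars_subset[OF indep_obs]) (auto simp: I_def)
  have mono: "moving_sum m (\<lambda>i. b + a * z i) n \<le> moving_sum m (\<lambda>i. b + a * z' i) n"
    if "\<forall>i\<in>I. b + a * z i \<le> b + a * z' i" "n \<in> N" for z z' n
    using windows[OF that(2)] that(1) unfolding moving_sum_def by (intro sum_mono) auto
  have antitone: "antitone_coords (\<lambda>c d. b + a * c \<le> b + a * d) I (space (PiM I (\<lambda>_. borel))) (indicator (C n))"
    if "n \<in> N" for n
    unfolding antitone_coords_indicator C_def by (blast intro: le_less_trans[OF mono[OF _ that]])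
  have sets: "C n \<in> sets (PiM I (\<lambda>_. borel))" if "n \<in> N" for n
    unfolding C_def by (rule sets_PiM_moving_sum_less[OF windows[OF that]]) simp
  have "(\<Prod>n\<in>N. prob {\<omega> \<in> space M. restrict (\<lambda>i. x i \<omega>) I \<in> C n})
      \<le> prob {\<omega> \<in> space M. \<forall>n\<in>N. restrict (\<lambda>i. x i \<omega>) I \<in> C n}"
    by (rule harris_inequality_indep_vars_prod[OF _ _ indep _ assms sets antitone]) (auto simp: I_def)
  moreover have "restrict (\<lambda>i. x i \<omega>) I \<in> C n \<longleftrightarrow> window_sum n \<omega> < h" if "n \<in> N" for n \<omega>
    using window_sum_restrict[OF windows[OF that]] by (simp add: C_def space_PiM)
  ultimately show ?thesis by (simp cong: prod.cong conj_cong)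
qed

lemma false_alarm_le:
  assumes mean: "\<And>i. 1 \<le> i \<Longrightarrow> \<mu> i = c"
  shows "prob {\<omega> \<in> space M. enat l \<le> alarm_time h \<omega> \<and> alarm_time h \<omega> < enat (l + k)}
    \<le> 1 - Phi ((h - real m * (b + a * c)) / sqrt (real m * (a\<^sup>2 * \<sigma>\<^sup>2))) ^ k"
proof -
  define p where "p = Phi ((h - real m * (b + a * c)) / sqrt (real m * (a\<^sup>2 * \<sigma>\<^sup>2)))"
  define N where "N = {n. l \<le> n \<and> n < l + k \<and> m \<le> n}"
  define Quiet where "Quiet = {\<omega> \<in> space M. \<forall>n\<in>N. window_sum n \<omega> < h}"
  have "N \<subseteq> {l..<l + k}" by (auto simp: N_def)
  then have N: "finite N" "card N \<le> k"
    using finite_subset card_mono[of "{l..<l + k}" N] by auto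
  have Quiet: "Quiet \<in> events"
    unfolding Quiet_def using N(1) by (intro sets.sets_Collect_finite_All sets_window_sum_less)
  have "p ^ k \<le> p ^ card N"
    using N(2) Phi_bounds by (simp add: p_def power_decreasing)
  also have "\<dots> = (\<Prod>n\<in>N. prob {\<omega> \<in> space M. window_sum n \<omega> < h})"
    unfolding prod_constant[symmetric]
    by (rule prod.cong) (use mean in \<open>auto simp: p_def N_def intro!: prob_window_sum_less[symmetric]\<close>)
  also have "\<dots> \<le> prob Quiet"
    unfolding Quiet_def by (rule prod_prob_window_sum_less_le[OF N(1)])
  finally have "p ^ k \<le> prob Quiet" .
  moreover have "{\<omega> \<in> space M. enat l \<le> alarm_time h \<omega> \<and> alarm_time h \<omega> < enat (l + k)} \<subseteq> space M - Quiet"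
    by (auto simp: Quiet_def N_def alarm_time_def window_sum_def dest!: T_FC_alarm_window)
  then have "prob {\<omega> \<in> space M. enat l \<le> alarm_time h \<omega> \<and> alarm_time h \<omega> < enat (l + k)} \<le> 1 - prob Quiet"
    using finite_measure_mono[of _ "space M - Quiet"] prob_compl[OF Quiet] Quiet by auto
  ultimately show ?thesis unfolding p_def by linarith
qed

end

lemma Phi_Phi_inv_root_power:
  assumes "0 < \<alpha>" "\<alpha> < 1" "1 \<le> k"
  shows "Phi (Phi_inv ((1 - \<alpha>) powr (1 / real k))) ^ k = 1 - \<alpha>"
proof -
  define p where "p = (1 - \<alpha>) powr (1 / real k)"
  have "0 < p" using assms by (simp add: p_def)
  moreover have "p < 1"
    using powr_less_mono2[of "1 / real k" "1 - \<alpha>" 1] assms by (simp add: p_def)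
  moreover have "p ^ k = 1 - \<alpha>"
    using \<open>0 < p\<close> assms by (simp add: p_def powr_realpow[symmetric] powr_powr)
  ultimately show ?thesis
    unfolding p_def[symmetric] by (simp add: Phi_Phi_inv)
qed

theorem corollary2:
  fixes P :: "enat \<Rightarrow> 'a measure" and x :: "nat \<Rightarrow> 'a \<Rightarrow> real"
    and m m\<^sub>\<alpha> :: nat and \<mu>0 \<mu>1 \<mu>1t \<sigma> h \<alpha> :: real
  assumes m: "m \<ge> 1" and m\<alpha>: "m\<^sub>\<alpha> \<ge> 1"
    and \<sigma>: "\<sigma> > 0" and tuned: "\<mu>1t \<noteq> \<mu>0"
    and prob: "\<And>v. v \<noteq> 0 \<Longrightarrow> prob_space (P v)"
    and indep: "\<And>v. v \<noteq> 0 \<Longrightarrow> prob_space.indep_vars (P v) (\<lambda>_. borel) x {1..}"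
    and distr: "\<And>v n. v \<noteq> 0 \<Longrightarrow> n \<ge> 1 \<Longrightarrow>
                  distributed (P v) lborel (x n) (\<lambda>z. ennreal (normal_density (obs_mean \<mu>0 \<mu>1 m v n) \<sigma> z))"
  defines "\<mu>y0 \<equiv> - ((\<mu>1t - \<mu>0)\<^sup>2 / (2 * \<sigma>\<^sup>2))"
    and "\<mu>y1 \<equiv> (\<mu>1t - \<mu>0) / \<sigma>\<^sup>2 * (\<mu>1 - (\<mu>1t + \<mu>0) / 2)"
    and "\<sigma>y2 \<equiv> - 2 * (- ((\<mu>1t - \<mu>0)\<^sup>2 / (2 * \<sigma>\<^sup>2)))"
    and "T \<equiv> (\<lambda>hc \<omega>. T_FC m hc (\<lambda>i. LLRc \<mu>0 \<mu>1t \<sigma> (x i \<omega>)))"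
  shows "P_md P (T h) m \<le> Phi ((h - real m * \<mu>y1) / sqrt (real m * \<sigma>y2))
       \<and> P_fa (P \<infinity>) (T h) m\<^sub>\<alpha> \<le> 1 - (Phi ((h - real m * \<mu>y0) / sqrt (real m * \<sigma>y2))) ^ m\<^sub>\<alpha>
       \<and> (0 < \<alpha> \<and> \<alpha> < 1 \<longrightarrow>
            P_fa (P \<infinity>) (T (sqrt (real m * \<sigma>y2) * Phi_inv ((1 - \<alpha>) powr (1 / real m\<^sub>\<alpha>)) + real m * \<mu>y0)) m\<^sub>\<alpha> \<le> \<alpha>)"
proof -
  define a b where "a = (\<mu>1t - \<mu>0) / \<sigma>\<^sup>2" and "b = - a * ((\<mu>1t + \<mu>0) / 2)"
  have "a \<noteq> 0" using tuned \<sigma> by (simp add: a_def)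
  then have model: "gaussian_moving_sum (P v) x (obs_mean \<mu>0 \<mu>1 m v) \<sigma> m a" if "v \<noteq> 0" for v
    using prob[OF that] indep[OF that] distr[OF that] \<sigma> m
    by (simp add: gaussian_moving_sum_def gaussian_moving_sum_axioms_def)
  have "LLRc \<mu>0 \<mu>1t \<sigma> z = b + a * z" for z
    using \<sigma> by (simp add: LLRc_def a_def b_def field_simps)
  \<comment> \<open>\<open>alarm_time\<close> does not depend on the measure, so any instance of the model unfolds it\<close>
  then have T_eq: "T hc \<omega> = gaussian_moving_sum.alarm_time x m a b hc \<omega>" for hc \<omega>
    using gaussian_moving_sum.alarm_time_def[OF model[of \<infinity>]] by (simp add: T_def)
  have params: "\<mu>y0 = b + a * \<mu>0" "\<mu>y1 = b + a * \<mu>1" "\<sigma>y2 = a\<^sup>2 * \<sigma>\<^sup>2"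
    using \<sigma> by (simp_all add: \<mu>y0_def \<mu>y1_def \<sigma>y2_def a_def b_def field_simps power2_eq_square)
  have md: "P_md P (T h) m \<le> Phi ((h - real m * \<mu>y1) / sqrt (real m * \<sigma>y2))"
    unfolding P_md_def T_eq params
    by (rule cSUP_least)
      (auto simp: obs_mean_def zero_enat_def intro!: gaussian_moving_sum.missed_detection_le[OF model])
  have fa: "P_fa (P \<infinity>) (T hc) m\<^sub>\<alpha> \<le> 1 - Phi ((hc - real m * \<mu>y0) / sqrt (real m * \<sigma>y2)) ^ m\<^sub>\<alpha>" for hc
    unfolding P_fa_def T_eq params
    by (rule cSUP_least) (auto simp: obs_mean_def intro!: gaussian_moving_sum.false_alarm_le[OF model])
  have "0 < \<sigma>y2" using \<sigma> \<open>a \<noteq> 0\<close> by (simp add: params)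
  then have "P_fa (P \<infinity>) (T (sqrt (real m * \<sigma>y2) * Phi_inv ((1 - \<alpha>) powr (1 / real m\<^sub>\<alpha>)) + real m * \<mu>y0)) m\<^sub>\<alpha> \<le> \<alpha>"
    if "0 < \<alpha>" "\<alpha> < 1"
    using fa[of "sqrt (real m * \<sigma>y2) * Phi_inv ((1 - \<alpha>) powr (1 / real m\<^sub>\<alpha>)) + real m * \<mu>y0"]
      Phi_Phi_inv_root_power[OF that m\<alpha>] m
    by simp
  with md fa show ?thesis by blast
qed

end
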